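(* Let $a\in \mathcal{A}$ and $k\in \mathbb{N}$. Then the following are equivalent: (1) $a\in \mathcal{A}^{\mathrm{gcEP}}$; (2) $a^k\in \mathcal{A}^{\mathrm{gcEP}}$. In this case, $(a^k)^{\mathrm{gcEP}}=(a^{\mathrm{gcEP}})^k$ and $a^{\mathrm{gcEP}}=a^{k-1}(a^k)^{\mathrm{gcEP}}$.
   Context: $\mathcal{A}$ is a complex Banach *-algebra with identity. An element $a$ has a generalized core-EP inverse if there is $x\in\mathcal{A}$ with $x=ax^2$, $(ax)^*=ax$, $\lim_{n\to\infty}\|a^n-xa^{n+1}\|^{1/n}=0$; such $x$ is unique, denoted $a^{\mathrm{gcEP}}$, and $\mathcal{A}^{\mathrm{gcEP}}$ is the set of such $a$. *)

theory Defs
  imports "HOL-Analysis.Analysis"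
begin

class cbanach_star_algebra = real_normed_algebra_1 + banach +
  fixes scaleC :: "complex \<Rightarrow> 'a \<Rightarrow> 'a"
    and adj :: "'a \<Rightarrow> 'a"
  assumes scaleC_of_real: "scaleC (complex_of_real r) x = scaleR r x"
    and scaleC_add_right: "scaleC c (x + y) = scaleC c x + scaleC c y"
    and scaleC_add_left: "scaleC (c + d) x = scaleC c x + scaleC d x"
    and scaleC_scaleC: "scaleC c (scaleC d x) = scaleC (c * d) x"
    and scaleC_one: "scaleC 1 x = x"
    and norm_scaleC: "norm (scaleC c x) = cmod c * norm x"
    and mult_scaleC_left: "scaleC c x * y = scaleC c (x * y)"
    and mult_scaleC_right: "x * scaleC c y = scaleC c (x * y)"
    and adj_add: "adj (x + y) = adj x + adj y"
    and adj_scaleC: "adj (scaleC c x) = scaleC (cnj c) (adj x)"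
    and adj_mult: "adj (x * y) = adj y * adj x"
    and adj_adj: "adj (adj x) = x"

definition is_gcEP_inverse :: "'a::cbanach_star_algebra \<Rightarrow> 'a \<Rightarrow> bool" where
  "is_gcEP_inverse a x \<longleftrightarrow>
     x = a * x ^ 2 \<and> adj (a * x) = a * x \<and>
     (\<lambda>n. root n (norm (a ^ n - x * a ^ (n + 1)))) \<longlonglongrightarrow> 0"

definition has_gcEP :: "'a::cbanach_star_algebra \<Rightarrow> bool" where
  "has_gcEP a \<longleftrightarrow> (\<exists>x. is_gcEP_inverse a x)"

definition gcEP :: "'a::cbanach_star_algebra \<Rightarrow> 'a" where
  "gcEP a = (THE x. is_gcEP_inverse a x)"

end

theory Submission
  imports Defs
begin

text \<open>If x = a x^2 then x = a^n x^(n+1) for every n, so an element w that can be written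
  as a^n u v^n for every n satisfies w - y a w = (a^n - y a^(n+1)) u v^n.  When this defect of y
  decays faster than every geometric sequence, the constant w - y a w must vanish, i.e. y a w = w.
  For two gcEP inverses x, y of a this makes a x and a y self-adjoint idempotents absorbing each
  other, so a x = a y and x = y a x = y.  For powers, the defect of (a^k, x^k) at n telescopes
  into the sum of x^i times the defect of (a, x) at k n + i (i < k); conversely the defect of
  (a, a^(k-1) y) at n = (k-1) + k m + r is a^(k-1) times the defect of (a^k, y) at m times a^r.
  Both reindexings preserve superexponential decay.\<close>

definition superexp_decay :: "(nat \<Rightarrow> 'a::real_normed_vector) \<Rightarrow> bool" where
  "superexp_decay g \<longleftrightarrow> (\<forall>\<epsilon>>0. \<exists>C. \<forall>n. norm (g n) \<le> C * \<epsilon>^n)"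

lemma superexp_decayI_eventually:
  assumes "\<And>\<epsilon>. \<epsilon> > 0 \<Longrightarrow> \<exists>C. \<forall>\<^sub>F n in sequentially. norm (g n) \<le> C * \<epsilon>^n"
  shows "superexp_decay g"
  unfolding superexp_decay_def
proof (intro allI impI)
  fix \<epsilon> :: real assume \<epsilon>: "\<epsilon> > 0"
  obtain C N where CN: "\<And>n. n \<ge> N \<Longrightarrow> norm (g n) \<le> C * \<epsilon>^n"
    using assms[OF \<epsilon>] unfolding eventually_sequentially by blast
  define S where "S = (\<Sum>m<N. norm (g m) / \<epsilon>^m)"
  have "0 \<le> S" using \<epsilon> unfolding S_def by (intro sum_nonneg) simp
  have "norm (g n) \<le> (\<bar>C\<bar> + S) * \<epsilon>^n" for n
  proof (cases "n \<ge> N")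
    case True
    have "C * \<epsilon>^n \<le> (\<bar>C\<bar> + S) * \<epsilon>^n"
      using \<open>0 \<le> S\<close> \<epsilon> by (intro mult_right_mono) auto
    with CN[OF True] show ?thesis by linarith
  next
    case False
    then have "norm (g n) / \<epsilon>^n \<le> S"
      using \<epsilon> unfolding S_def by (intro member_le_sum) auto
    then have "norm (g n) \<le> S * \<epsilon>^n" using \<epsilon> by (simp add: pos_divide_le_eq)
    also have "\<dots> \<le> (\<bar>C\<bar> + S) * \<epsilon>^n" using \<epsilon> by (intro mult_right_mono) auto
    finally show ?thesis .
  qed
  then show "\<exists>C. \<forall>n. norm (g n) \<le> C * \<epsilon>^n" by blast
qed

lemma superexp_decay_iff_root:
  "superexp_decay g \<longleftrightarrow> (\<lambda>n. root n (norm (g n))) \<longlonglongrightarrow> 0"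
proof
  assume g: "superexp_decay g"
  show "(\<lambda>n. root n (norm (g n))) \<longlonglongrightarrow> 0"
  proof (rule order_tendstoI)
    fix a :: real assume "a < 0"
    then show "\<forall>\<^sub>F n in sequentially. a < root n (norm (g n))"
      by (intro always_eventually allI) (metis less_le_trans norm_ge_zero real_root_ge_zero)
  next
    fix \<epsilon> :: real assume \<epsilon>: "0 < \<epsilon>"
    obtain C where C: "\<And>n. norm (g n) \<le> C * (\<epsilon>/2)^n"
      using g \<epsilon> unfolding superexp_decay_def by (metis half_gt_zero)
    have C': "norm (g n) \<le> max C 1 * (\<epsilon>/2)^n" for n
      using \<epsilon> by (intro order_trans[OF C[of n]] mult_right_mono) auto
    have "(\<lambda>n. root n (max C 1)) \<longlonglongrightarrow> 1" by (rule LIMSEQ_root_const) simp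
    then have "\<forall>\<^sub>F n in sequentially. root n (max C 1) < 2"
      by (rule order_tendstoD) simp
    then show "\<forall>\<^sub>F n in sequentially. root n (norm (g n)) < \<epsilon>"
      using eventually_gt_at_top[of 0]
    proof eventually_elim
      case (elim n)
      have "root n (norm (g n)) \<le> root n (max C 1 * (\<epsilon>/2)^n)"
        using C' elim by (simp add: real_root_le_iff)
      also have "\<dots> = root n (max C 1) * (\<epsilon>/2)"
        using elim \<epsilon> by (simp add: real_root_mult real_root_pos2 del: real_root_power)
      also have "\<dots> < 2 * (\<epsilon>/2)" using elim \<epsilon> by (intro mult_strict_right_mono) auto
      finally show ?case by simp
    qed
  qed
next
  assume root: "(\<lambda>n. root n (norm (g n))) \<longlonglongrightarrow> 0"
  show "superexp_decay g"
  proof (rule superexp_decayI_eventually)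
    fix \<epsilon> :: real assume "\<epsilon> > 0"
    with root have "\<forall>\<^sub>F n in sequentially. root n (norm (g n)) < \<epsilon>"
      by (rule order_tendstoD)
    then have "\<forall>\<^sub>F n in sequentially. norm (g n) \<le> 1 * \<epsilon>^n"
      using eventually_gt_at_top[of 0]
    proof eventually_elim
      case (elim n)
      have "norm (g n) = root n (norm (g n)) ^ n" using elim by (simp add: real_root_pow_pos2)
      also have "\<dots> \<le> \<epsilon>^n" using elim by (intro power_mono) auto
      finally show ?case by simp
    qed
    then show "\<exists>C. \<forall>\<^sub>F n in sequentially. norm (g n) \<le> C * \<epsilon>^n" by blast
  qed
qed

lemma superexp_decay_bound_nonneg:
  assumes "\<And>n. norm (f n) \<le> C * \<epsilon>^n" shows "0 \<le> C"
  using assms[of 0] by (metis norm_ge_zero order_trans power_0 mult_1_right)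

lemma superexp_decay_reindex:
  assumes f: "superexp_decay f" and "0 \<le> D" and h: "\<And>n. n \<le> s * h n + K"
    and g: "\<forall>\<^sub>F n in sequentially. norm (g n) \<le> D * norm (f (h n))"
  shows "superexp_decay g"
proof (rule superexp_decayI_eventually)
  fix \<epsilon> :: real assume "\<epsilon> > 0"
  define \<delta> where "\<delta> = min \<epsilon> 1"
  have \<delta>: "0 < \<delta>" "\<delta> \<le> 1" "\<delta> \<le> \<epsilon>" using \<open>\<epsilon> > 0\<close> by (auto simp: \<delta>_def)
  obtain C where C: "\<And>m. norm (f m) \<le> C * (\<delta>^s)^m"
    using f \<delta> unfolding superexp_decay_def by (meson zero_less_power)
  have "0 \<le> C" using C by (rule superexp_decay_bound_nonneg)
  have "norm (g n) \<le> (D * C / \<delta>^K) * \<epsilon>^n"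
    if gn: "norm (g n) \<le> D * norm (f (h n))" for n
  proof -
    have "\<delta>^(s * h n) * \<delta>^K \<le> \<epsilon>^n"
    proof -
      have "\<delta>^(s * h n) * \<delta>^K = \<delta>^(s * h n + K)" by (simp add: power_add)
      also have "\<dots> \<le> \<delta>^n" using \<delta> h by (intro power_decreasing) auto
      also have "\<dots> \<le> \<epsilon>^n" using \<delta> by (intro power_mono) auto
      finally show ?thesis .
    qed
    then have decay: "\<delta>^(s * h n) \<le> \<epsilon>^n / \<delta>^K" using \<delta> by (simp add: pos_le_divide_eq)
    have "norm (g n) \<le> D * (C * (\<delta>^s)^(h n))"
      using gn C[of "h n"] \<open>0 \<le> D\<close> by (meson mult_left_mono order_trans)
    also have "\<dots> = (D * C) * \<delta>^(s * h n)" by (simp add: power_mult)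
    also have "\<dots> \<le> (D * C) * (\<epsilon>^n / \<delta>^K)"
      using decay \<open>0 \<le> D\<close> \<open>0 \<le> C\<close> by (intro mult_left_mono) auto
    finally show ?thesis by simp
  qed
  with g show "\<exists>C. \<forall>\<^sub>F n in sequentially. norm (g n) \<le> C * \<epsilon>^n"
    by (blast intro: eventually_mono)
qed

lemma superexp_decay_mult_right:
  fixes f :: "nat \<Rightarrow> 'a::real_normed_algebra"
  assumes "superexp_decay f" shows "superexp_decay (\<lambda>n. f n * v)"
  by (rule superexp_decay_reindex[OF assms, of "norm v" 1 id 0])
     (auto intro!: always_eventually simp: norm_mult_ineq mult.commute[of "norm v"])

lemma superexp_decay_mult_power:
  fixes f :: "nat \<Rightarrow> 'a::real_normed_algebra_1"
  assumes f: "superexp_decay f" shows "superexp_decay (\<lambda>n. f n * w^n)"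
  unfolding superexp_decay_def
proof (intro allI impI)
  fix \<epsilon> :: real assume "\<epsilon> > 0"
  then obtain C where C: "\<And>n. norm (f n) \<le> C * (\<epsilon> / (norm w + 1))^n"
    using f unfolding superexp_decay_def by (metis divide_pos_pos norm_ge_zero add_nonneg_pos zero_less_one)
  have "0 \<le> C" using C by (rule superexp_decay_bound_nonneg)
  have "norm (f n * w^n) \<le> C * \<epsilon>^n" for n
  proof -
    have "norm (f n * w^n) \<le> norm (f n) * norm w ^ n"
      by (metis norm_mult_ineq norm_power_ineq mult_left_mono norm_ge_zero order_trans)
    also have "\<dots> \<le> C * (\<epsilon> / (norm w + 1))^n * norm w ^ n"
      using C by (intro mult_right_mono) auto
    also have "\<dots> = C * (\<epsilon> * norm w / (norm w + 1))^n"
      by (simp add: power_mult_distrib power_divide)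
    also have "\<dots> \<le> C * \<epsilon>^n"
    proof (intro mult_left_mono power_mono)
      have "\<epsilon> * norm w \<le> \<epsilon> * (norm w + 1)" using \<open>\<epsilon> > 0\<close> by simp
      then show "\<epsilon> * norm w / (norm w + 1) \<le> \<epsilon>"
        by (subst pos_divide_le_eq) (auto intro: add_nonneg_pos)
    qed (use \<open>\<epsilon> > 0\<close> \<open>0 \<le> C\<close> in auto)
    finally show ?thesis .
  qed
  then show "\<exists>C. \<forall>n. norm (f n * w^n) \<le> C * \<epsilon>^n" by blast
qed

lemma superexp_decay_add:
  assumes f: "superexp_decay f" and g: "superexp_decay g"
  shows "superexp_decay (\<lambda>n. f n + g n)"
  unfolding superexp_decay_def
proof (intro allI impI)
  fix \<epsilon> :: real assume "\<epsilon> > 0"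
  then obtain C1 C2 where "\<And>n. norm (f n) \<le> C1 * \<epsilon>^n" "\<And>n. norm (g n) \<le> C2 * \<epsilon>^n"
    using f g unfolding superexp_decay_def by meson
  then have "norm (f n + g n) \<le> (C1 + C2) * \<epsilon>^n" for n
    by (smt (verit) distrib_right norm_triangle_ineq)
  then show "\<exists>C. \<forall>n. norm (f n + g n) \<le> C * \<epsilon>^n" by blast
qed

lemma superexp_decay_sum:
  assumes "finite I" "\<And>i. i \<in> I \<Longrightarrow> superexp_decay (f i)"
  shows "superexp_decay (\<lambda>n. \<Sum>i\<in>I. f i n)"
  using assms
proof (induction I rule: finite_induct)
  case empty
  then show ?case by (auto simp: superexp_decay_def intro: exI[of _ 0])
next
  case (insert i I)
  then show ?case by (simp add: superexp_decay_add)
qed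

lemma superexp_decay_const_eq_0:
  assumes "superexp_decay (\<lambda>n. z)" shows "z = 0"
proof -
  obtain C where C: "\<And>n. norm z \<le> C * (1/2)^n"
    using assms unfolding superexp_decay_def by (metis divide_pos_pos zero_less_numeral zero_less_one)
  have "(\<lambda>n. C * (1/2::real)^n) \<longlonglongrightarrow> C * 0"
    by (intro tendsto_mult tendsto_const LIMSEQ_power_zero) auto
  then have "norm z \<le> 0" using C by (intro LIMSEQ_le_const) auto
  then show ?thesis by simp
qed

lemma power_absorb:
  fixes a x :: "'a::monoid_mult"
  assumes x: "x = a * x^2" and "0 < n"
  shows "a^j * x^(j + n) = x^n"
proof -
  have step: "a * x^(Suc m) = x^m" if "0 < m" for m
  proof -
    have "a * x^(Suc m) = (a * x^2) * x^(m - 1)"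
      using \<open>0 < m\<close> by (simp add: power2_eq_square mult.assoc flip: power_Suc)
    also have "\<dots> = x^m" using \<open>0 < m\<close> by (simp flip: x power_Suc)
    finally show ?thesis .
  qed
  show ?thesis
  proof (induction j)
    case (Suc j)
    have "a^(Suc j) * x^(Suc j + n) = a^j * (a * x^(Suc (j + n)))"
      by (simp only: add_Suc power_Suc2[of a] mult.assoc)
    also have "\<dots> = a^j * x^(j + n)" using \<open>0 < n\<close> by (subst step) auto
    finally show ?case using Suc.IH by simp
  qed simp
qed

lemma power_absorb_Suc:
  fixes a x :: "'a::monoid_mult"
  assumes "x = a * x^2" shows "a^j * x^(Suc j) = x"
  using power_absorb[OF assms, of 1 j] by simp

definition gcEP_defect :: "'a::ring_1 \<Rightarrow> 'a \<Rightarrow> nat \<Rightarrow> 'a" where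
  "gcEP_defect a x n = a^n - x * a^(n + 1)"

lemma is_gcEP_inverse_iff:
  "is_gcEP_inverse a x \<longleftrightarrow>
     x = a * x^2 \<and> adj (a * x) = a * x \<and> superexp_decay (gcEP_defect a x)"
  unfolding is_gcEP_inverse_def superexp_decay_iff_root gcEP_defect_def ..

lemma gcEP_defect_telescope:
  "a^m - x^j * a^(m + j) = (\<Sum>i<j. x^i * gcEP_defect a x (m + i))"
proof (induction j)
  case (Suc j)
  have "x^j * gcEP_defect a x (m + j) = x^j * a^(m + j) - (x^j * x) * a^(m + j + 1)"
    by (simp only: gcEP_defect_def right_diff_distrib mult.assoc)
  also have "\<dots> = x^j * a^(m + j) - x^(Suc j) * a^(m + Suc j)"
    by (simp flip: power_Suc2)
  finally show ?case using Suc.IH by (simp add: algebra_simps)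
qed simp

lemma gcEP_defect_power:
  "gcEP_defect (a^k) (x^k) n = (\<Sum>i<k. x^i * gcEP_defect a x (k * n + i))"
proof -
  have "(a^k)^(n + 1) = a^(k * n + k)"
    by (simp only: flip: power_mult) (simp add: algebra_simps)
  then have "gcEP_defect (a^k) (x^k) n = a^(k * n) - x^k * a^(k * n + k)"
    by (simp only: gcEP_defect_def flip: power_mult)
  then show ?thesis by (simp add: gcEP_defect_telescope)
qed

lemma gcEP_defect_mult_power:
  assumes n: "n = j + Suc j * m + r"
  shows "gcEP_defect a (a^j * y) n = a^j * gcEP_defect (a^Suc j) y m * a^r"
proof -
  have "n + 1 = Suc j * (m + 1) + r" using n by simp
  then have head: "a^(Suc j * (m + 1)) * a^r = a^(n + 1)" by (simp only: power_add)
  have tail: "a^j * (a^(Suc j * m) * a^r) = a^n" by (simp only: n power_add mult.assoc)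
  have "a^j * gcEP_defect (a^Suc j) y m * a^r
          = a^j * (a^(Suc j * m) * a^r) - a^j * (y * (a^(Suc j * (m + 1)) * a^r))"
    unfolding gcEP_defect_def power_mult by (simp only: right_diff_distrib left_diff_distrib mult.assoc)
  also have "\<dots> = gcEP_defect a (a^j * y) n"
    unfolding head tail gcEP_defect_def by (simp only: mult.assoc)
  finally show ?thesis ..
qed

lemma gcEP_defect_absorb:
  fixes a :: "'a::real_normed_algebra_1"
  assumes decay: "superexp_decay (gcEP_defect a y)" and w: "\<And>n. w = a^n * u * v^n"
  shows "y * a * w = w"
proof -
  have defect: "w - y * a * w = gcEP_defect a y n * u * v^n" for n
  proof -
    have "w - y * a * w = a^n * u * v^n - y * a * (a^n * u * v^n)" by (subst (1 2) w) simp
    then show ?thesis by (simp add: gcEP_defect_def left_diff_distrib mult.assoc)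
  qed
  have "superexp_decay (\<lambda>n. gcEP_defect a y n * u * v^n)"
    by (intro superexp_decay_mult_power superexp_decay_mult_right decay)
  then have "w - y * a * w = 0"
    unfolding defect[symmetric] by (rule superexp_decay_const_eq_0)
  then show ?thesis by simp
qed

lemma is_gcEP_inverse_unique:
  assumes x: "is_gcEP_inverse a x" and y: "is_gcEP_inverse a y"
  shows "x = y"
proof -
  have x2: "x = a * x^2" and sx: "adj (a * x) = a * x" and dx: "superexp_decay (gcEP_defect a x)"
    using x by (auto simp: is_gcEP_inverse_iff)
  have y2: "y = a * y^2" and sy: "adj (a * y) = a * y" and dy: "superexp_decay (gcEP_defect a y)"
    using y by (auto simp: is_gcEP_inverse_iff)
  have x_pow: "x = a^n * x * x^n" and y_pow: "y = a^n * y * y^n" for n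
    using power_absorb_Suc[OF x2, of n] power_absorb_Suc[OF y2, of n] by (simp_all add: mult.assoc)
  have yax: "y * a * x = x" and xay: "x * a * y = y" and yay: "y * a * y = y"
    by (rule gcEP_defect_absorb[OF dy x_pow] gcEP_defect_absorb[OF dx y_pow]
        gcEP_defect_absorb[OF dy y_pow])+
  have "a * x = adj (a * x)" using sx by simp
  also have "\<dots> = adj ((a * y) * (a * x))" using yax by (simp add: mult.assoc)
  also have "\<dots> = (a * x) * (a * y)" using sx sy by (simp add: adj_mult)
  also have "\<dots> = a * y" using xay by (simp add: mult.assoc)
  finally have "a * x = a * y" .
  then show ?thesis using yax yay by (metis mult.assoc)
qed

lemma gcEP_eqI: "is_gcEP_inverse a x \<Longrightarrow> gcEP a = x"
  unfolding gcEP_def by (blast intro: the_equality is_gcEP_inverse_unique)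

lemma superexp_decay_gcEP_defect_power:
  fixes a :: "'a::real_normed_algebra_1"
  assumes decay: "superexp_decay (gcEP_defect a x)" and "0 < k"
  shows "superexp_decay (gcEP_defect (a^k) (x^k))"
  unfolding gcEP_defect_power
proof (intro superexp_decay_sum)
  fix i
  show "superexp_decay (\<lambda>n. x^i * gcEP_defect a x (k * n + i))"
  proof (rule superexp_decay_reindex[OF decay, of "norm (x^i)" 1 "\<lambda>n. k * n + i" 0])
    show "n \<le> 1 * (k * n + i) + 0" for n using \<open>0 < k\<close> by (cases k) auto
  qed (auto intro: always_eventually norm_mult_ineq)
qed simp

lemma superexp_decay_gcEP_defect_of_power:
  fixes a :: "'a::real_normed_algebra_1"
  assumes decay: "superexp_decay (gcEP_defect (a^Suc j) y)"
  shows "superexp_decay (gcEP_defect a (a^j * y))"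
proof (rule superexp_decay_reindex[OF decay, of "norm (a^j) * (1 + norm a)^j" "Suc j"
      "\<lambda>n. (n - j) div Suc j" "j + Suc j"])
  show "n \<le> Suc j * ((n - j) div Suc j) + (j + Suc j)" for n
  proof -
    have "n - j = Suc j * ((n - j) div Suc j) + (n - j) mod Suc j"
      by (simp only: mult_div_mod_eq)
    moreover have "(n - j) mod Suc j < Suc j" by simp
    ultimately show ?thesis by linarith
  qed
  show "\<forall>\<^sub>F n in sequentially. norm (gcEP_defect a (a^j * y) n)
          \<le> norm (a^j) * (1 + norm a)^j * norm (gcEP_defect (a^Suc j) y ((n - j) div Suc j))"
    using eventually_ge_at_top[of j]
  proof eventually_elim
    case (elim n)
    define m where "m = (n - j) div Suc j"
    define r where "r = (n - j) mod Suc j"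
    have "n - j = Suc j * m + r" unfolding m_def r_def by (simp only: mult_div_mod_eq)
    then have n: "n = j + Suc j * m + r" using elim by linarith
    have "r \<le> j" unfolding r_def using less_Suc_eq_le by simp
    have "norm (a^r) \<le> (1 + norm a)^j"
    proof -
      have "norm (a^r) \<le> norm a ^ r" by (rule norm_power_ineq)
      also have "\<dots> \<le> (1 + norm a)^r" by (intro power_mono) auto
      also have "\<dots> \<le> (1 + norm a)^j" using \<open>r \<le> j\<close> by (intro power_increasing) auto
      finally show ?thesis .
    qed
    then have "norm (a^j * gcEP_defect (a^Suc j) y m * a^r)
                 \<le> norm (a^j) * norm (gcEP_defect (a^Suc j) y m) * (1 + norm a)^j"
      by (intro order_trans[OF norm_mult_ineq] mult_mono norm_mult_ineq) auto
    then show ?case unfolding gcEP_defect_mult_power[OF n] m_def by (simp add: ac_simps)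
  qed
qed simp

lemma mult_square_of_power:
  fixes a :: "'a::real_normed_algebra_1" and j :: nat
  defines "b \<equiv> a^Suc j"
  assumes y2: "y = b * y^2" and decay: "superexp_decay (gcEP_defect b y)"
  shows "a^j * y = a * (a^j * y)^2"
proof -
  have commute: "b^n * a^j = a^j * b^n" for n
  proof (rule power_commuting_commutes)
    show "b * a^j = a^j * b" unfolding b_def by (simp only: flip: power_add) simp
  qed
  have "a^j * y^2 = b^n * (a^j * y^2) * y^n" for n
  proof -
    have "b^n * (a^j * y^2) * y^n = (b^n * a^j) * (y^2 * y^n)" by (simp only: mult.assoc)
    also have "\<dots> = (a^j * b^n) * y^(n + 2)" by (simp add: commute add.commute flip: power_add)
    also have "\<dots> = a^j * y^2" using power_absorb[OF y2, of 2 n] by (simp add: mult.assoc)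
    finally show ?thesis ..
  qed
  then have absorb: "y * b * (a^j * y^2) = a^j * y^2" by (rule gcEP_defect_absorb[OF decay])
  have "b * (a^j * y^2) = (b * a^j) * y^2" by (simp only: mult.assoc)
  also have "\<dots> = a^j * y" using commute[of 1] by (simp add: mult.assoc flip: y2)
  finally have b_shift: "b * (a^j * y^2) = a^j * y" .
  have "a * (a^j * y)^2 = b * y * (a^j * y)"
    by (simp only: b_def power2_eq_square power_Suc mult.assoc)
  also have "\<dots> = b * (y * b * (a^j * y^2))" by (simp only: b_shift mult.assoc)
  also have "\<dots> = a^j * y" by (simp only: absorb b_shift)
  finally show ?thesis ..
qed

lemma is_gcEP_inverse_power:
  assumes x: "is_gcEP_inverse a x" and "0 < k"
  shows "is_gcEP_inverse (a^k) (x^k)"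
proof -
  have x2: "x = a * x^2" and "adj (a * x) = a * x" and decay: "superexp_decay (gcEP_defect a x)"
    using x by (auto simp: is_gcEP_inverse_iff)
  obtain j where k: "k = Suc j" using \<open>0 < k\<close> gr0_implies_Suc by blast
  have "x^k = a^k * (x^k)^2"
    using power_absorb[OF x2 \<open>0 < k\<close>, of k] by (simp add: power2_eq_square power_add)
  moreover have "a^k * x^k = a * x"
    using power_absorb_Suc[OF x2, of j] by (simp add: k mult.assoc)
  ultimately show ?thesis
    using \<open>adj (a * x) = a * x\<close> superexp_decay_gcEP_defect_power[OF decay \<open>0 < k\<close>]
    by (simp add: is_gcEP_inverse_iff)
qed

lemma is_gcEP_inverse_of_power:
  assumes "is_gcEP_inverse (a^Suc j) y"
  shows "is_gcEP_inverse a (a^j * y)"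
proof -
  have y2: "y = a^Suc j * y^2" and "adj (a^Suc j * y) = a^Suc j * y"
    and decay: "superexp_decay (gcEP_defect (a^Suc j) y)"
    using assms by (auto simp: is_gcEP_inverse_iff)
  moreover have "a * (a^j * y) = a^Suc j * y" by (simp add: mult.assoc)
  ultimately show ?thesis
    using mult_square_of_power[OF y2 decay] superexp_decay_gcEP_defect_of_power[OF decay]
    by (simp add: is_gcEP_inverse_iff)
qed

theorem lemma3p4:
  fixes a :: "'a::cbanach_star_algebra" and k :: nat
  assumes "k \<ge> 1"
  shows "(has_gcEP a \<longleftrightarrow> has_gcEP (a ^ k)) \<and>
         (has_gcEP a \<longrightarrow> gcEP (a ^ k) = (gcEP a) ^ k \<and> gcEP a = a ^ (k - 1) * gcEP (a ^ k))"
proof -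
  obtain j where k: "k = Suc j" using assms by (cases k) auto
  have "has_gcEP a \<longleftrightarrow> has_gcEP (a^k)"
    unfolding has_gcEP_def k
    using is_gcEP_inverse_power[of a _ "Suc j"] is_gcEP_inverse_of_power by blast
  moreover have "gcEP (a^k) = (gcEP a)^k \<and> gcEP a = a^(k - 1) * gcEP (a^k)" if "has_gcEP a"
  proof -
    obtain x where x: "is_gcEP_inverse a x" using \<open>has_gcEP a\<close> unfolding has_gcEP_def by blast
    then have "x = a * x^2" by (simp add: is_gcEP_inverse_iff)
    then have "a^j * x^k = x" unfolding k by (rule power_absorb_Suc)
    moreover have "gcEP a = x" by (rule gcEP_eqI[OF x])
    moreover have "gcEP (a^k) = x^k" using k by (intro gcEP_eqI is_gcEP_inverse_power x) simp
    ultimately show ?thesis using k by simp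
  qed
  ultimately show ?thesis by blast
qed

end
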